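(* For every integer $n\ge0$, $$7J\mathcal{G}_{n}^{(3)}+K\mathcal{G}_{n}^{(3)}=3\cdot2^{n}\Theta+X_{n}(\mathbf{A}+\mathbf{C})-X_{n+1}(\mathbf{B}+\mathbf{D})$$ and $$7J\mathcal{G}_{n}^{(3)}-K\mathcal{G}_{n}^{(3)}=2^{n}\Theta+X_{n}(\mathbf{A}-\mathbf{C})-X_{n+1}(\mathbf{B}-\mathbf{D}),$$ where $\Theta=1+2\mathbf{e}_1+4\mathbf{e}_2+8\mathbf{e}_3$, $\mathbf{A}=1+2\mathbf{e}_1-3\mathbf{e}_2+\mathbf{e}_3$, $\mathbf{B}=2-3\mathbf{e}_1+\mathbf{e}_2+2\mathbf{e}_3$, $\mathbf{C}=1-2\mathbf{e}_1+\mathbf{e}_2+\mathbf{e}_3$, $\mathbf{D}=-2+\mathbf{e}_1+\mathbf{e}_2-2\mathbf{e}_3$.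
   Context: Fix real numbers $\lambda_1,\lambda_2,\lambda_3$. The algebra $\mathbb{H}_{\lambda_1,\lambda_2,\lambda_3}$ of 3-parameter generalized quaternions is the real associative algebra of elements $\psi_0+\psi_1\mathbf{e}_1+\psi_2\mathbf{e}_2+\psi_3\mathbf{e}_3$ ($\psi_i\in\mathbb{R}$) with $\mathbf{e}_1^2=-\lambda_1\lambda_2$, $\mathbf{e}_2^2=-\lambda_1\lambda_3$, $\mathbf{e}_3^2=-\lambda_2\lambda_3$, $\mathbf{e}_1\mathbf{e}_2=-\mathbf{e}_2\mathbf{e}_1=\lambda_1\mathbf{e}_3$, $\mathbf{e}_1\mathbf{e}_3=-\mathbf{e}_3\mathbf{e}_1=-\lambda_2\mathbf{e}_2$, $\mathbf{e}_2\mathbf{e}_3=-\mathbf{e}_3\mathbf{e}_2=\lambda_3\mathbf{e}_1$. The third-order Jacobsthal numbers are $J_0^{(3)}=0$, $J_1^{(3)}=J_2^{(3)}=1$, $J_n^{(3)}=J_{n-1}^{(3)}+J_{n-2}^{(3)}+2J_{n-3}^{(3)}$ for $n\ge3$; the modified third-order Jacobsthal numbers are $K_0^{(3)}=3$, $K_1^{(3)}=1$, $K_2^{(3)}=3$, $K_n^{(3)}=K_{n-1}^{(3)}+K_{n-2}^{(3)}+2K_{n-3}^{(3)}$ for $n\ge3$. For $n\ge0$ define $J\mathcal{G}_n^{(3)}=J_n^{(3)}+J_{n+1}^{(3)}\mathbf{e}_1+J_{n+2}^{(3)}\mathbf{e}_2+J_{n+3}^{(3)}\mathbf{e}_3$ and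 $K\mathcal{G}_n^{(3)}=K_n^{(3)}+K_{n+1}^{(3)}\mathbf{e}_1+K_{n+2}^{(3)}\mathbf{e}_2+K_{n+3}^{(3)}\mathbf{e}_3$. The integer sequence $X_n$ is defined by $X_n=0,1,-1$ according as $n\equiv0,1,2\pmod 3$. *)

theory Defs
  imports Main Complex_Main
begin

text \<open>Elements psi0 + psi1 e1 + psi2 e2 + psi3 e3 of the 3-parameter generalized
quaternions, stored by their four real coordinates.\<close>

datatype gq = GQ real real real real

fun gq_add :: "gq \<Rightarrow> gq \<Rightarrow> gq" where
  "gq_add (GQ a0 a1 a2 a3) (GQ b0 b1 b2 b3) = GQ (a0+b0) (a1+b1) (a2+b2) (a3+b3)"

fun gq_sub :: "gq \<Rightarrow> gq \<Rightarrow> gq" where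
  "gq_sub (GQ a0 a1 a2 a3) (GQ b0 b1 b2 b3) = GQ (a0-b0) (a1-b1) (a2-b2) (a3-b3)"

fun gq_scale :: "real \<Rightarrow> gq \<Rightarrow> gq" where
  "gq_scale c (GQ a0 a1 a2 a3) = GQ (c*a0) (c*a1) (c*a2) (c*a3)"

text \<open>Multiplication of H_{l1,l2,l3} (bilinear extension of the basis table).\<close>
fun gq_mult :: "real \<Rightarrow> real \<Rightarrow> real \<Rightarrow> gq \<Rightarrow> gq \<Rightarrow> gq" where
  "gq_mult l1 l2 l3 (GQ a0 a1 a2 a3) (GQ b0 b1 b2 b3) =
     GQ (a0*b0 - l1*l2*a1*b1 - l1*l3*a2*b2 - l2*l3*a3*b3)
        (a0*b1 + a1*b0 + l3*(a2*b3 - a3*b2))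
        (a0*b2 + a2*b0 - l2*(a1*b3 - a3*b1))
        (a0*b3 + a3*b0 + l1*(a1*b2 - a2*b1))"

definition gq_one :: gq where "gq_one = GQ 1 0 0 0"
definition gq_e1 :: gq where "gq_e1 = GQ 0 1 0 0"
definition gq_e2 :: gq where "gq_e2 = GQ 0 0 1 0"
definition gq_e3 :: gq where "gq_e3 = GQ 0 0 0 1"

definition gq_mk :: "real \<Rightarrow> real \<Rightarrow> real \<Rightarrow> real \<Rightarrow> gq" where
  "gq_mk x0 x1 x2 x3 =
     gq_add (gq_add (gq_add (gq_scale x0 gq_one) (gq_scale x1 gq_e1)) (gq_scale x2 gq_e2))
            (gq_scale x3 gq_e3)"

fun jac3 :: "nat \<Rightarrow> int" where
  "jac3 0 = 0"
| "jac3 (Suc 0) = 1"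
| "jac3 (Suc (Suc 0)) = 1"
| "jac3 (Suc (Suc (Suc n))) = jac3 (Suc (Suc n)) + jac3 (Suc n) + 2 * jac3 n"

fun kjac3 :: "nat \<Rightarrow> int" where
  "kjac3 0 = 3"
| "kjac3 (Suc 0) = 1"
| "kjac3 (Suc (Suc 0)) = 3"
| "kjac3 (Suc (Suc (Suc n))) = kjac3 (Suc (Suc n)) + kjac3 (Suc n) + 2 * kjac3 n"

definition JG3 :: "nat \<Rightarrow> gq" where
  "JG3 n = gq_mk (jac3 n) (jac3 (n+1)) (jac3 (n+2)) (jac3 (n+3))"

definition KG3 :: "nat \<Rightarrow> gq" where
  "KG3 n = gq_mk (kjac3 n) (kjac3 (n+1)) (kjac3 (n+2)) (kjac3 (n+3))"

definition Xseq :: "nat \<Rightarrow> int" where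
  "Xseq n = (if n mod 3 = 0 then 0 else if n mod 3 = 1 then 1 else -1)"

end

theory Submission
  imports Defs
begin

text \<open>The characteristic polynomial of the recurrence factors as
\<open>x\<^sup>3 - x\<^sup>2 - x - 2 = (x - 2)(x\<^sup>2 + x + 1)\<close>, so every solution is a combination of
\<open>2\<^sup>n\<close> and the two period-3 sequences \<open>X\<^sub>n\<close>, \<open>X\<^sub>n\<^sub>+\<^sub>1\<close>. Matching initial values gives
\<open>7 J\<^sub>n = 2\<^sup>n\<^sup>+\<^sup>1 + X\<^sub>n - 2 X\<^sub>n\<^sub>+\<^sub>1\<close> and \<open>K\<^sub>n = 2\<^sup>n + X\<^sub>n + 2 X\<^sub>n\<^sub>+\<^sub>1\<close>, hence
\<open>7 J\<^sub>n + K\<^sub>n = 3\<cdot>2\<^sup>n + 2 X\<^sub>n\<close> and \<open>7 J\<^sub>n - K\<^sub>n = 2\<^sup>n - 4 X\<^sub>n\<^sub>+\<^sub>1\<close>. Applied to the four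
coordinates \<open>n, \<dots>, n + 3\<close> and reduced with \<open>X\<^sub>n + X\<^sub>n\<^sub>+\<^sub>1 + X\<^sub>n\<^sub>+\<^sub>2 = 0\<close> and
\<open>X\<^sub>n\<^sub>+\<^sub>3 = X\<^sub>n\<close>, these are the two identities of the theorem.\<close>

text \<open>The redundant forms match the index terms \<open>n + k + 1\<close> arising from
\<open>m + 1\<close> at \<open>m = n + k\<close>, so the facts can be used for plain rewriting.\<close>
lemma Xseq_shifts:
  "Xseq (n + 2) = - Xseq n - Xseq (n + 1)" "Xseq (n + 1 + 1) = - Xseq n - Xseq (n + 1)"
  "Xseq (n + 3) = Xseq n" "Xseq (n + 2 + 1) = Xseq n" "Xseq (n + 3 + 1) = Xseq (n + 1)"
  unfolding Xseq_def by presburger+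

lemma jac3_recurrence_unique:
  fixes f g :: "nat \<Rightarrow> 'a :: semiring_1"
  assumes f_rec: "\<And>n. f (n + 3) = f (n + 2) + f (n + 1) + 2 * f n"
      and g_rec: "\<And>n. g (n + 3) = g (n + 2) + g (n + 1) + 2 * g n"
      and "f 0 = g 0" "f 1 = g 1" "f 2 = g 2"
  shows "f n = g n"
proof (induction n rule: jac3.induct)
  case (4 n)
  then show ?case
    using f_rec[of n] g_rec[of n] by (simp add: numeral_eq_Suc)
qed (use assms in \<open>simp_all add: numeral_eq_Suc\<close>)

definition jac3_general_solution :: "'a :: comm_ring_1 \<Rightarrow> 'a \<Rightarrow> 'a \<Rightarrow> nat \<Rightarrow> 'a" where
  "jac3_general_solution a b c n = a * 2 ^ n + b * of_int (Xseq n) + c * of_int (Xseq (n + 1))"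

lemma jac3_general_solution_rec:
  "jac3_general_solution a b c (n + 3) =
     jac3_general_solution a b c (n + 2) + jac3_general_solution a b c (n + 1)
       + 2 * jac3_general_solution a b c n"
  unfolding jac3_general_solution_def Xseq_shifts power_add
  by (simp add: algebra_simps)

lemma jac3_closed_form: "7 * jac3 n = jac3_general_solution 2 1 (-2) n"
proof (rule jac3_recurrence_unique)
  show "7 * jac3 (m + 3) = 7 * jac3 (m + 2) + 7 * jac3 (m + 1) + 2 * (7 * jac3 m)" for m
    by (simp add: eval_nat_numeral)
  show "7 * jac3 2 = jac3_general_solution 2 1 (-2) 2"
    by (simp add: numeral_2_eq_2 jac3_general_solution_def Xseq_def)
qed (rule jac3_general_solution_rec | simp add: jac3_general_solution_def Xseq_def)+

lemma kjac3_closed_form: "kjac3 n = jac3_general_solution 1 1 2 n"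
proof (rule jac3_recurrence_unique)
  show "kjac3 (m + 3) = kjac3 (m + 2) + kjac3 (m + 1) + 2 * kjac3 m" for m
    by (simp add: eval_nat_numeral)
  show "kjac3 2 = jac3_general_solution 1 1 2 2"
    by (simp add: numeral_2_eq_2 jac3_general_solution_def Xseq_def)
qed (rule jac3_general_solution_rec | simp add: jac3_general_solution_def Xseq_def)+

lemma jac3_kjac3_sum: "7 * jac3 n + kjac3 n = 3 * 2 ^ n + 2 * Xseq n"
  using jac3_closed_form[of n] kjac3_closed_form[of n]
  by (simp add: jac3_general_solution_def)

lemma jac3_kjac3_diff: "7 * jac3 n - kjac3 n = 2 ^ n - 4 * Xseq (n + 1)"
  using jac3_closed_form[of n] kjac3_closed_form[of n]
  by (simp add: jac3_general_solution_def)

lemma gq_mk_eq_GQ: "gq_mk x0 x1 x2 x3 = GQ x0 x1 x2 x3"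
  by (simp add: gq_mk_def gq_one_def gq_e1_def gq_e2_def gq_e3_def)

theorem theorem4p4:
  fixes n :: nat
  defines "Theta \<equiv> gq_mk 1 2 4 8"
      and "A \<equiv> gq_mk 1 2 (-3) 1"
      and "B \<equiv> gq_mk 2 (-3) 1 2"
      and "C \<equiv> gq_mk 1 (-2) 1 1"
      and "D \<equiv> gq_mk (-2) 1 1 (-2)"
  shows "gq_add (gq_scale 7 (JG3 n)) (KG3 n) =
           gq_sub (gq_add (gq_scale (3 * 2 ^ n) Theta) (gq_scale (Xseq n) (gq_add A C)))
                  (gq_scale (Xseq (n+1)) (gq_add B D)) \<and>
         gq_sub (gq_scale 7 (JG3 n)) (KG3 n) =
           gq_sub (gq_add (gq_scale (2 ^ n) Theta) (gq_scale (Xseq n) (gq_sub A C)))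
                  (gq_scale (Xseq (n+1)) (gq_sub B D))"
proof -
  have sum: "7 * real_of_int (jac3 m) + real_of_int (kjac3 m)
               = 3 * 2 ^ m + 2 * real_of_int (Xseq m)" for m
    using arg_cong[where f = real_of_int, OF jac3_kjac3_sum] by simp
  have diff: "7 * real_of_int (jac3 m) - real_of_int (kjac3 m)
                = 2 ^ m - 4 * real_of_int (Xseq (m + 1))" for m
    using arg_cong[where f = real_of_int, OF jac3_kjac3_diff] by simp
  show ?thesis
    unfolding assms JG3_def KG3_def gq_mk_eq_GQ gq_add.simps gq_sub.simps gq_scale.simps
      gq.inject sum diff Xseq_shifts
    by (simp add: power_add algebra_simps)
qed

end
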